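(* Let $\alpha>2$ with $\alpha\notin\mathbb N$ and $\lfloor\alpha\rfloor$ even. Let $K_\alpha=\{\exp(2\ell\pi i/\alpha): \ell\in\mathbb Z,\ -\alpha/2<\ell\le \alpha/2\}$. Then for all $\lambda\in[\tfrac12,1]$ and $k\in\mathbb N$, \[ \sum_{\omega\in K_\alpha}(1+\lambda\omega)^{\alpha k}\le \alpha(1+\lambda)^{\alpha k}, \] where the (real-valued) left-hand side uses the principal branch $z^{\alpha k}=\exp(\alpha k\operatorname{Log} z)$. *)

theory Defs
  imports "HOL-Analysis.Analysis"
begin

definition K_set :: "real \<Rightarrow> complex set" where
  "K_set a = {exp (2 * of_int l * of_real pi * \<i> / of_real a) | l :: int.
                 - a / 2 < real_of_int l \<and> real_of_int l \<le> a / 2}"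

end

theory Submission
  imports Defs
begin

text \<open>Write \<open>\<lfloor>\<alpha>\<rfloor> = 2m\<close>, so that \<open>K\<^sub>\<alpha>\<close> consists of the \<open>2m + 1\<close> points \<open>cis (2l\<pi>/\<alpha>)\<close>,
  \<open>-m \<le> l \<le> m\<close>. This set is closed under conjugation, and the principal power commutes
  with conjugation on the closed right half plane, so the sum is real. Each term has modulus at
  most \<open>(1 + \<lambda>)\<^sup>\<alpha>\<^sup>k\<close>; the two extreme points \<open>l = \<plusminus>m\<close> have argument \<open>2m\<pi>/\<alpha> \<ge> 2\<pi>/3\<close>
  (as \<open>\<alpha> < 2m + 1 \<le> 3m\<close>), so there \<open>\<bar>1 + \<lambda>\<omega>\<bar> \<le> (1 + \<lambda>)/\<surd>2\<close> and, since \<open>\<alpha>k > 2\<close>, those two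
  terms together contribute at most one \<open>(1 + \<lambda>)\<^sup>\<alpha>\<^sup>k\<close>. Hence the real part is at most
  \<open>2m (1 + \<lambda>)\<^sup>\<alpha>\<^sup>k \<le> \<alpha> (1 + \<lambda>)\<^sup>\<alpha>\<^sup>k\<close>.\<close>

lemma K_set_eq_cis_image:
  fixes a :: real and m :: int
  assumes "2 * m < a" "a < 2 * m + 2"
  shows "K_set a = (\<lambda>l. cis (2 * real_of_int l * pi / a)) ` {-m..m}"
proof -
  have range: "(- a / 2 < real_of_int l \<and> real_of_int l \<le> a / 2) \<longleftrightarrow> l \<in> {-m..m}" for l
  proof
    assume "- a / 2 < real_of_int l \<and> real_of_int l \<le> a / 2"
    then have "real_of_int l < m + 1" "- real_of_int l < m + 1" using assms by auto
    then show "l \<in> {-m..m}" by auto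
  next
    assume "l \<in> {-m..m}"
    then show "- a / 2 < real_of_int l \<and> real_of_int l \<le> a / 2" using assms by auto
  qed
  have exp_eq_cis: "exp (2 * of_int l * of_real pi * \<i> / of_real a) = cis (2 * real_of_int l * pi / a)" for l
    by (simp add: cis_conv_exp mult.commute mult.left_commute)
  show ?thesis
    unfolding K_set_def exp_eq_cis using range by blast
qed

lemma cnj_image_cis_odd:
  fixes \<theta> :: "int \<Rightarrow> real" and m :: int
  assumes "\<And>l. \<theta> (- l) = - \<theta> l"
  shows "cnj ` (\<lambda>l. cis (\<theta> l)) ` {-m..m} = (\<lambda>l. cis (\<theta> l)) ` {-m..m}"
proof -
  have "cnj ` (\<lambda>l. cis (\<theta> l)) ` {-m..m} = (\<lambda>l. cis (\<theta> l)) ` uminus ` {-m..m}"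
    unfolding image_image using assms by (intro image_cong) (auto simp: complex_eq_iff)
  also have "uminus ` {-m..m} = {-m..m}"
    by force
  finally show ?thesis .
qed

lemma Im_sum_eq_0_if_cnj_invariant:
  fixes f :: "complex \<Rightarrow> complex"
  assumes "cnj ` S = S" and "\<And>z. z \<in> S \<Longrightarrow> cnj (f z) = f (cnj z)"
  shows "Im (sum f S) = 0"
proof -
  have "cnj (sum f S) = (\<Sum>z\<in>S. cnj (f z))"
    by simp
  also have "\<dots> = (\<Sum>z\<in>S. f (cnj z))"
    using assms(2) by (rule sum.cong[OF refl])
  also have "\<dots> = sum f (cnj ` S)"
    by (simp add: sum.reindex inj_on_def)
  finally have "cnj (sum f S) = sum f S"
    using assms(1) by simp
  then show ?thesis
    by (metis Reals_cnj_iff complex_is_Real_iff)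
qed

lemma cnj_powr_1_plus_cis:
  fixes lam t r :: real
  assumes "\<bar>lam\<bar> \<le> 1"
  shows "cnj ((1 + of_real lam * cis t) powr of_real r) = (1 + of_real lam * cis (- t)) powr of_real r"
proof -
  have "\<bar>lam * cos t\<bar> \<le> 1"
    using assms by (simp add: abs_mult mult_le_one)
  then have "lam * cos t \<ge> -1"
    by linarith
  then have "cnj ((1 + of_real lam * cis t) powr of_real r) = cnj (1 + of_real lam * cis t) powr of_real r"
    by (subst cnj_powr) auto
  also have "cnj (1 + of_real lam * cis t) = 1 + of_real lam * cis (- t)"
    by (simp add: complex_eq_iff)
  finally show ?thesis .
qed

lemma norm_1_plus_cis_squared:
  fixes lam t :: real
  shows "(cmod (1 + of_real lam * cis t))\<^sup>2 = 1 + lam\<^sup>2 + 2 * lam * cos t"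
proof -
  have "(cmod (1 + of_real lam * cis t))\<^sup>2 = (1 + lam * cos t)\<^sup>2 + (lam * sin t)\<^sup>2"
    by (simp add: cmod_power2)
  also have "\<dots> = 1 + lam\<^sup>2 * ((sin t)\<^sup>2 + (cos t)\<^sup>2) + 2 * lam * cos t"
    by algebra
  finally show ?thesis
    by simp
qed

lemma norm_1_plus_cis_le_div_sqrt2:
  fixes lam t :: real
  assumes "1/2 \<le> lam" "lam \<le> 1" "cos t \<le> -1/2"
  shows "cmod (1 + of_real lam * cis t) \<le> (1 + lam) / sqrt 2"
proof (rule power2_le_imp_le)
  have "lam * cos t \<le> lam * (-1/2)"
    using assms by (intro mult_left_mono) auto
  moreover have "1 + lam * lam \<le> 4 * lam"
    using assms mult_left_le[of lam lam] by linarith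
  ultimately show "(cmod (1 + of_real lam * cis t))\<^sup>2 \<le> ((1 + lam) / sqrt 2)\<^sup>2"
    unfolding norm_1_plus_cis_squared by (simp add: power_divide power2_eq_square field_simps)
  show "0 \<le> (1 + lam) / sqrt 2"
    using assms by simp
qed

lemma norm_powr_1_plus_cis_le:
  fixes lam t r :: real
  assumes "0 \<le> lam" "0 \<le> r"
  shows "cmod ((1 + of_real lam * cis t) powr of_real r) \<le> (1 + lam) powr r"
proof -
  have "cmod (1 + of_real lam * cis t) \<le> 1 + lam"
    using norm_triangle_ineq[of 1 "of_real lam * cis t"] assms by (simp add: norm_mult)
  then show ?thesis
    using assms by (simp add: norm_powr_real_powr' powr_mono2)
qed

lemma norm_powr_1_plus_cis_le_half:
  fixes lam t r :: real
  assumes "1/2 \<le> lam" "lam \<le> 1" "cos t \<le> -1/2" "2 \<le> r"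
  shows "cmod ((1 + of_real lam * cis t) powr of_real r) \<le> (1 + lam) powr r / 2"
proof -
  have "cmod ((1 + of_real lam * cis t) powr of_real r) \<le> ((1 + lam) / sqrt 2) powr r"
    using assms norm_1_plus_cis_le_div_sqrt2[OF assms(1-3)]
    by (simp add: norm_powr_real_powr' powr_mono2)
  also have "\<dots> = (1 + lam) powr r / sqrt 2 powr r"
    using assms by (simp add: powr_divide)
  also have "\<dots> \<le> (1 + lam) powr r / sqrt 2 powr 2"
    using assms by (intro divide_left_mono powr_mono mult_pos_pos) auto
  also have "sqrt 2 powr 2 = 2"
    by (simp add: powr_numeral)
  finally show ?thesis .
qed

lemma cos_le_neg_half_if_mult_le:
  fixes a m :: real
  assumes "2 * m \<le> a" "a \<le> 3 * m" "0 < a"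
  shows "cos (2 * m * pi / a) \<le> -1/2"
proof -
  have "2 * pi / 3 \<le> 2 * m * pi / a" "2 * m * pi / a \<le> pi"
    using assms by (simp_all add: field_simps)
  then have "cos (2 * m * pi / a) \<le> cos (2 * pi / 3)"
    by (intro cos_monotone_0_pi_le) auto
  then show ?thesis
    by (simp add: cos_120)
qed

lemma sum_symmetric_interval_le:
  fixes g :: "int \<Rightarrow> real" and m :: int and B :: real
  assumes "1 \<le> m" and "\<And>l. g l \<le> B" and "g m \<le> B / 2" "g (-m) \<le> B / 2"
  shows "sum g {-m..m} \<le> 2 * m * B"
proof -
  have "{-m..m} = insert (-m) (insert m {-m+1..m-1})"
    using assms(1) by auto
  then have "sum g {-m..m} = g (-m) + g m + sum g {-m+1..m-1}"
    using assms(1) by (simp add: add.assoc)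
  also have "sum g {-m+1..m-1} \<le> (2 * m - 1) * B"
    using sum_mono[of "{-m+1..m-1}" g "\<lambda>_. B"] assms by simp
  finally show ?thesis
    using assms(3,4) by (simp add: algebra_simps)
qed

lemma even_floor_bounds:
  fixes a :: real
  assumes "a > 2" and "a \<notin> \<nat>" and "even \<lfloor>a\<rfloor>"
  obtains m :: int where "2 * m < a" "a < 2 * m + 1" "1 \<le> m"
proof -
  obtain m where m: "\<lfloor>a\<rfloor> = 2 * m"
    using assms(3) by blast
  have "a \<noteq> of_int \<lfloor>a\<rfloor>"
  proof
    assume "a = of_int \<lfloor>a\<rfloor>"
    then have "a = real (nat \<lfloor>a\<rfloor>)"
      using assms(1) by linarith
    then show False
      using assms(2) by (metis of_nat_in_Nats)
  qed
  then have "2 * m < a" "a < 2 * m + 1" "1 \<le> m"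
    using m assms(1) by linarith+
  then show thesis
    by (rule that)
qed

theorem lemma6p1:
  fixes a lam :: real and k :: nat
  assumes "a > 2" and "a \<notin> \<nat>" and "even \<lfloor>a\<rfloor>"
    and "1/2 \<le> lam" and "lam \<le> 1" and "k \<ge> 1"
  shows "Im (\<Sum>\<omega>\<in>K_set a. (1 + of_real lam * \<omega>) powr of_real (a * real k)) = 0
       \<and> Re (\<Sum>\<omega>\<in>K_set a. (1 + of_real lam * \<omega>) powr of_real (a * real k))
           \<le> a * (1 + lam) powr (a * real k)"
proof -
  define r where "r = a * real k"
  define F :: "complex \<Rightarrow> complex" where "F = (\<lambda>\<omega>. (1 + of_real lam * \<omega>) powr of_real r)"
  define B where "B = (1 + lam) powr r"
  define \<theta> where "\<theta> = (\<lambda>l::int. 2 * real_of_int l * pi / a)"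
  obtain m :: int where bounds: "2 * m < a" "a < 2 * m + 1" "1 \<le> m"
    by (rule even_floor_bounds[OF assms(1-3)])
  have K: "K_set a = (\<lambda>l. cis (\<theta> l)) ` {-m..m}"
    unfolding \<theta>_def using K_set_eq_cis_image[of m a] bounds by simp
  have "a \<le> r"
    using assms(1,6) unfolding r_def by (simp add: mult_le_cancel_left1)
  then have r: "2 \<le> r"
    using assms(1) by linarith
  have extreme: "cos (\<theta> l) \<le> -1/2" if "l = m \<or> l = -m" for l
    using that bounds cos_le_neg_half_if_mult_le[of m a] unfolding \<theta>_def by auto
  have "Im (sum F (K_set a)) = 0"
  proof (rule Im_sum_eq_0_if_cnj_invariant)
    show "cnj ` K_set a = K_set a"
      unfolding K by (rule cnj_image_cis_odd) (simp add: \<theta>_def)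
    show "cnj (F \<omega>) = F (cnj \<omega>)" if \<omega>: "\<omega> \<in> K_set a" for \<omega>
    proof -
      obtain l where "\<omega> = cis (\<theta> l)"
        using \<omega> unfolding K by blast
      moreover have "cnj (cis (\<theta> l)) = cis (- \<theta> l)"
        by (simp add: complex_eq_iff)
      ultimately show ?thesis
        using assms(4,5) cnj_powr_1_plus_cis[of lam "\<theta> l" r] unfolding F_def by simp
    qed
  qed
  moreover have "Re (sum F (K_set a)) \<le> a * B"
  proof -
    have "Re (sum F (K_set a)) \<le> (\<Sum>\<omega>\<in>K_set a. cmod (F \<omega>))"
      using complex_Re_le_cmod[of "sum F (K_set a)"] norm_sum[of F "K_set a"] by linarith
    also have "\<dots> \<le> (\<Sum>l\<in>{-m..m}. cmod (F (cis (\<theta> l))))"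
      unfolding K using sum_image_le[of "{-m..m}" "\<lambda>\<omega>. cmod (F \<omega>)"] by (simp add: o_def)
    also have "\<dots> \<le> 2 * m * B"
      using bounds(3) r assms(4,5) extreme unfolding F_def B_def
      by (intro sum_symmetric_interval_le norm_powr_1_plus_cis_le norm_powr_1_plus_cis_le_half) auto
    also have "\<dots> \<le> a * B"
      using bounds unfolding B_def by (intro mult_right_mono) auto
    finally show ?thesis .
  qed
  ultimately show ?thesis
    unfolding F_def B_def r_def by (rule conjI)
qed

end
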